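(* For a non-negative integer $N$, let $\mathcal{Z}_N:=\sum_{c=0}^{N}\mathbb{Q}\cdot\zeta(-c,s+c)$ and $\mathcal{Z}:=\bigcup_{N\ge0}\mathcal{Z}_N$ (the $\mathbb{Q}$-vector spaces of meromorphic functions of $s$ spanned by these functions). Then $$\mathcal{Z}_N=\bigoplus_{\substack{c \text{ even}\\0\le c\le N}}\mathbb{Q}\cdot\zeta(-c,s+c),\qquad \mathcal{Z}=\bigoplus_{\substack{c\text{ even}\\ c\ge0}}\mathbb{Q}\cdot\zeta(-c,s+c),$$ and $\dim_{\mathbb{Q}}\mathcal{Z}_N=\lfloor N/2\rfloor+1$.
   Context: For an integer $c\ge 0$, $\zeta(-c,s+c)$ denotes the Euler–Zagier double zeta function $\zeta(s_1,s_2)=\sum_{1\le n_1<n_2} n_1^{-s_1}n_2^{-s_2}$ evaluated at $(s_1,s_2)=(-c,s+c)$; i.e. it is the meromorphic continuation to all $s\in\mathbb{C}$ of the series $\sum_{m,n\ge1} m^{c}(m+n)^{-s-c}$, which converges absolutely for $\Re(s)>2$. The direct sum notation means that the functions $\zeta(-c,s+c)$ with $c$ even in the indicated range are linearly independent over $\mathbb{Q}$ and span the space. *)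

theory Defs
  imports "HOL-Analysis.Analysis" "HOL-Library.Function_Algebras"
begin

text \<open>The function s |-> zeta(-c, s+c), represented by the absolutely convergent
  double series on the half-plane Re s > 2 (and 0 elsewhere).  By the identity
  theorem, Q-linear relations between the meromorphic continuations are exactly
  the Q-linear relations between these restrictions.\<close>
definition dzeta :: "nat \<Rightarrow> complex \<Rightarrow> complex" where
  "dzeta c s = (if Re s > 2 then
      infsum (\<lambda>(m::nat, n::nat). of_nat m ^ c * of_nat (m + n) powr (- s - of_nat c))
             ({1..} \<times> {1..})
    else 0)"

definition scaleQ :: "rat \<Rightarrow> (complex \<Rightarrow> complex) \<Rightarrow> (complex \<Rightarrow> complex)" where
  "scaleQ q f = (\<lambda>s. of_rat q * f s)"

definition ZN :: "nat \<Rightarrow> (complex \<Rightarrow> complex) set" where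
  "ZN N = module.span scaleQ (dzeta ` {..N})"

definition Zall :: "(complex \<Rightarrow> complex) set" where
  "Zall = (\<Union>N. ZN N)"

end

theory Submission
  imports Defs "HOL-Computational_Algebra.Polynomial"
begin

(* For Re s > 2, regrouping the double series by N = m + n gives the Dirichlet series
   zeta(-c, s+c) = \<Sum>N\<ge>2. rho_c(N) N^-s  with  rho_c(N) = N^-c \<Sum>0<m<N. m^c  (dzeta_coeff c N).
   By Faulhaber's formula and the reflection symmetry S_c(-x) = (-1)^(c+1) (S_c(x) + x^c) of the
   power-sum polynomial, rho_c(N) = a N + b + (terms N^-d with d odd, d \<le> c).  For even c = 2K the
   term with d = 2K - 1 is B_2K N^(1-2K), and B_2K \<noteq> 0: 2-adically, the recurrence of the Bernoulli
   numbers gives 2 B_2K = 1 (mod 2).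
   The rho_2i are therefore triangular with respect to N^-1, N^-3, ..., so they are linearly
   independent and every rho_c with c odd is a rational combination of the rho_2i with 2i < c.
   Uniqueness of Dirichlet coefficients transfers both facts to the functions zeta(-c, s+c). *)

lemma poly_eq_0_if_zero_at_large_nats:
  fixes p :: "'a::{idom,ring_char_0} poly"
  assumes "\<And>n. n \<ge> k \<Longrightarrow> poly p (of_nat n) = 0"
  shows "p = 0"
proof (rule ccontr)
  assume "p \<noteq> 0"
  then have "finite {x. poly p x = 0}" by (rule poly_roots_finite)
  moreover have "of_nat ` {k..} \<subseteq> {x. poly p x = 0}" using assms by auto
  ultimately have "finite ((of_nat :: nat \<Rightarrow> 'a) ` {k..})" by (rule finite_subset[rotated])
  then have "finite {k..}" by (rule finite_imageD) (simp add: inj_on_def)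
  then show False using infinite_Ici[of k] by blast
qed

lemma periodic_poly_eq_const:
  fixes p :: "'a::{idom,ring_char_0} poly"
  assumes "\<And>x. poly p (x + 1) = poly p x"
  shows "p = [:poly p 0:]"
proof -
  have "poly (p - [:poly p 0:]) (of_nat n) = 0" for n
    by (induction n) (simp_all add: assms[of "of_nat _", simplified add.commute])
  then have "p - [:poly p 0:] = 0" by (intro poly_eq_0_if_zero_at_large_nats[of 0]) auto
  then show ?thesis by simp
qed

lemma poly_altdef_le:
  fixes p :: "'a::comm_semiring_1 poly"
  assumes "degree p \<le> n"
  shows "poly p x = (\<Sum>i\<le>n. coeff p i * x ^ i)"
  unfolding poly_altdef using assms by (intro sum.mono_neutral_left) (auto simp: coeff_eq_0)

section \<open>Power-sum polynomials and Bernoulli numbers\<close>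

lemma power_sum_poly_exists:
  "\<exists>p::rat poly. degree p \<le> c + 1 \<and> (\<forall>x. poly p (x + 1) = poly p x + x ^ c) \<and> poly p 0 = 0"
proof (induction c rule: less_induct)
  case (less c)
  then obtain S :: "nat \<Rightarrow> rat poly"
    where S: "\<And>i. i < c \<Longrightarrow> degree (S i) \<le> i + 1"
      "\<And>i x. i < c \<Longrightarrow> poly (S i) (x + 1) = poly (S i) x + x ^ i"
      "\<And>i. i < c \<Longrightarrow> poly (S i) 0 = 0"
    by metis
  define Q where "Q = (\<Sum>i<c. smult (of_nat (c + 1 choose i)) (S i))"
  define p where "p = smult (1 / of_nat (c + 1)) (monom 1 (c + 1) - Q)"
  have "degree Q \<le> c + 1"
    unfolding Q_def using S(1) by (intro degree_sum_le order.trans[OF degree_smult_le]) force+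
  then have deg_p: "degree p \<le> c + 1"
    unfolding p_def by (intro order.trans[OF degree_smult_le] degree_diff_le) (simp_all add: degree_monom_le)
  have poly_Q: "poly Q x = (\<Sum>i<c. of_nat (c + 1 choose i) * poly (S i) x)" for x
    unfolding Q_def by (simp add: poly_sum)
  have Q_step: "poly Q (x + 1) = poly Q x + (\<Sum>i<c. of_nat (c + 1 choose i) * x ^ i)" for x
    unfolding poly_Q by (simp add: S(2) distrib_left sum.distrib)
  have binomial_expansion: "(x + 1) ^ (c + 1)
      = (\<Sum>i<c. of_nat (c + 1 choose i) * x ^ i) + of_nat (c + 1) * x ^ c + x ^ (c + 1)" for x :: rat
    by (subst binomial_ring) (simp add: lessThan_Suc_atMost[symmetric])
  have p_Q: "of_nat (c + 1) * poly p x = x ^ (c + 1) - poly Q x" for x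
    by (simp add: p_def poly_monom)
  have "of_nat (c + 1) * poly p (x + 1) = of_nat (c + 1) * (poly p x + x ^ c)" for x
  proof -
    have "of_nat (c + 1) * poly p (x + 1) = (x + 1) ^ (c + 1) - poly Q (x + 1)" by (rule p_Q)
    also have "\<dots> = of_nat (c + 1) * x ^ c + (x ^ (c + 1) - poly Q x)"
      unfolding Q_step binomial_expansion by (simp add: algebra_simps)
    also have "\<dots> = of_nat (c + 1) * (poly p x + x ^ c)"
      by (simp only: distrib_left p_Q)
    finally show ?thesis .
  qed
  then have "\<forall>x. poly p (x + 1) = poly p x + x ^ c" by simp
  moreover have "poly p 0 = 0" by (simp add: p_def poly_Q S(3) poly_monom)
  ultimately show ?case using deg_p by blast
qed

definition power_sum_poly :: "nat \<Rightarrow> rat poly" where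
  "power_sum_poly c =
     (SOME p. degree p \<le> c + 1 \<and> (\<forall>x. poly p (x + 1) = poly p x + x ^ c) \<and> poly p 0 = 0)"

lemma
  shows degree_power_sum_poly: "degree (power_sum_poly c) \<le> c + 1"
    and poly_power_sum_poly_plus_1: "poly (power_sum_poly c) (x + 1) = poly (power_sum_poly c) x + x ^ c"
    and poly_power_sum_poly_0: "poly (power_sum_poly c) 0 = 0"
  using someI_ex[OF power_sum_poly_exists[of c]] unfolding power_sum_poly_def[symmetric] by blast+

lemma coeff_0_power_sum_poly: "coeff (power_sum_poly c) 0 = 0"
  using poly_power_sum_poly_0 by (simp add: poly_0_coeff_0)

lemma power_sum_poly_unique:
  assumes "\<And>x. poly p (x + 1) = poly p x + x ^ c" "poly p 0 = 0"
  shows "p = power_sum_poly c"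
proof -
  have "p - power_sum_poly c = [:poly (p - power_sum_poly c) 0:]"
    by (rule periodic_poly_eq_const) (simp add: assms(1) poly_power_sum_poly_plus_1)
  then show ?thesis by (simp add: assms(2) poly_power_sum_poly_0)
qed

lemma power_sum_poly_0: "power_sum_poly 0 = [:0, 1:]"
  by (rule power_sum_poly_unique[symmetric]) simp_all

lemma poly_power_sum_poly_of_nat: "poly (power_sum_poly c) (of_nat N) = (\<Sum>m<N. of_nat m ^ c)"
  by (induction N)
    (simp_all add: poly_power_sum_poly_0 poly_power_sum_poly_plus_1[of c "of_nat _", simplified add.commute])

lemma power_sum_poly_reflect:
  assumes "c \<ge> 1"
  shows "pcompose (power_sum_poly c) [:0, -1:] = smult ((-1) ^ (c + 1)) (power_sum_poly c + monom 1 c)"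
proof -
  let ?S = "poly (power_sum_poly c)"
  let ?F = "pcompose (power_sum_poly c) [:0, -1:] - smult ((-1) ^ (c + 1)) (power_sum_poly c + monom 1 c)"
  have poly_F: "poly ?F y = ?S (- y) + (-1) ^ c * (?S y + y ^ c)" for y
    by (simp add: poly_pcompose poly_monom)
  have S_minus: "?S (- (x + 1)) = ?S (- x) - (-1) ^ c * (x + 1) ^ c" for x
    using poly_power_sum_poly_plus_1[of c "- (x + 1)"] power_minus[of "x + 1" c] by simp
  have "poly ?F (x + 1) = poly ?F x" for x
    unfolding poly_F S_minus poly_power_sum_poly_plus_1 by (simp add: algebra_simps)
  then have "?F = [:poly ?F 0:]" by (rule periodic_poly_eq_const)
  moreover have "poly ?F 0 = 0" using assms unfolding poly_F by (simp add: poly_power_sum_poly_0)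
  ultimately show ?thesis by simp
qed

lemma coeff_power_sum_poly_same_parity:
  assumes "c \<ge> 1" "j \<noteq> c" "even (c + j)"
  shows "coeff (power_sum_poly c) j = 0"
proof -
  have "(-1) ^ j * coeff (power_sum_poly c) j = (-1) ^ (c + 1) * coeff (power_sum_poly c) j"
    using arg_cong[OF power_sum_poly_reflect[OF assms(1)], of "\<lambda>p. coeff p j"] assms(2)
    by (simp add: coeff_pcompose_linear)
  then show ?thesis using assms(3) by (cases "even c") auto
qed

lemma pderiv_power_sum_poly:
  assumes "c \<ge> 1"
  shows "pderiv (power_sum_poly c) = smult (of_nat c) (power_sum_poly (c - 1)) + [:coeff (power_sum_poly c) 1:]"
proof -
  have "pcompose (power_sum_poly c) [:1, 1:] = power_sum_poly c + monom 1 c"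
    by (intro poly_eq_poly_eq_iff[THEN iffD1] ext)
      (simp add: poly_pcompose poly_monom poly_power_sum_poly_plus_1[simplified add.commute])
  from arg_cong[OF this, of pderiv]
  have D_shift: "pcompose (pderiv (power_sum_poly c)) [:1, 1:]
      = pderiv (power_sum_poly c) + monom (of_nat c) (c - 1)"
    by (simp add: pderiv_pcompose pderiv_add pderiv_monom pderiv_pCons)
  have D_step: "poly (pderiv (power_sum_poly c)) (x + 1)
      = poly (pderiv (power_sum_poly c)) x + of_nat c * x ^ (c - 1)" for x
    using arg_cong[OF D_shift, of "\<lambda>p. poly p x"] by (simp add: poly_pcompose poly_monom add.commute)
  let ?D = "pderiv (power_sum_poly c) - smult (of_nat c) (power_sum_poly (c - 1))"
  have "?D = [:poly ?D 0:]"
    by (rule periodic_poly_eq_const) (simp add: D_step poly_power_sum_poly_plus_1 algebra_simps)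
  moreover have "poly ?D 0 = coeff (power_sum_poly c) 1"
    by (simp add: poly_0_coeff_0 coeff_pderiv coeff_0_power_sum_poly)
  ultimately show ?thesis by (simp add: diff_eq_eq add.commute)
qed

text \<open>By Faulhaber's formula these are the Bernoulli numbers with \<open>bernoulli 1 = -1/2\<close>.\<close>

definition bernoulli :: "nat \<Rightarrow> rat" where
  "bernoulli c = coeff (power_sum_poly c) 1"

lemma bernoulli_0: "bernoulli 0 = 1"
  by (simp add: bernoulli_def power_sum_poly_0)

lemma coeff_power_sum_poly:
  "j \<le> c \<Longrightarrow> coeff (power_sum_poly c) (Suc j) = of_nat (c choose j) / of_nat (Suc j) * bernoulli (c - j)"
proof (induction j arbitrary: c)
  case 0
  then show ?case by (simp add: bernoulli_def)
next
  case (Suc j)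
  then obtain n where c: "c = Suc n" and "j \<le> n" by (cases c) auto
  have "of_nat (Suc (Suc j)) * coeff (power_sum_poly c) (Suc (Suc j))
      = of_nat c * coeff (power_sum_poly n) (Suc j)"
    using arg_cong[OF pderiv_power_sum_poly[of c], of "\<lambda>p. coeff p (Suc j)"]
    by (simp add: coeff_pderiv c)
  also have "\<dots> = of_nat (c * (n choose j)) / of_nat (Suc j) * bernoulli (c - Suc j)"
    using Suc.IH[OF \<open>j \<le> n\<close>] by (simp add: c ring_distribs)
  also have "c * (n choose j) = (c choose Suc j) * Suc j"
    unfolding c by (rule Suc_times_binomial_eq)
  also have "of_nat ((c choose Suc j) * Suc j) / of_nat (Suc j) * bernoulli (c - Suc j)
      = of_nat (c choose Suc j) * bernoulli (c - Suc j)"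
    by (simp add: field_simps)
  finally show ?case by (simp add: field_simps)
qed

lemma bernoulli_recurrence:
  assumes "c \<ge> 1"
  shows "(\<Sum>j\<le>c. of_nat (c choose j) * 2 ^ j / of_nat (Suc j) * bernoulli (c - j)) = 1 / 2"
proof -
  have "1 = poly (power_sum_poly c) 2"
    using poly_power_sum_poly_of_nat[of c 2] assms by (simp add: numeral_2_eq_2)
  also have "\<dots> = (\<Sum>i\<le>Suc c. coeff (power_sum_poly c) i * 2 ^ i)"
    by (rule poly_altdef_le) (rule degree_power_sum_poly[simplified])
  also have "\<dots> = (\<Sum>j\<le>c. coeff (power_sum_poly c) (Suc j) * 2 ^ Suc j)"
    by (subst sum.atMost_Suc_shift) (simp add: coeff_0_power_sum_poly)
  also have "\<dots> = 2 * (\<Sum>j\<le>c. of_nat (c choose j) * 2 ^ j / of_nat (Suc j) * bernoulli (c - j))"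
    unfolding sum_distrib_left by (intro sum.cong refl) (simp add: coeff_power_sum_poly field_simps)
  finally show ?thesis by simp
qed

definition odd_denom :: "rat \<Rightarrow> bool" where
  "odd_denom q \<longleftrightarrow> (\<exists>a b :: int. odd b \<and> q = of_int a / of_int b)"

lemma odd_denom_of_int [simp]: "odd_denom (of_int a)"
  unfolding odd_denom_def by (rule exI[of _ a], rule exI[of _ 1]) simp

lemma odd_denom_of_nat [simp]: "odd_denom (of_nat n)"
  using odd_denom_of_int[of "int n"] by simp

lemma odd_denom_0 [simp]: "odd_denom 0"
  using odd_denom_of_int[of 0] by simp

lemma odd_denom_1 [simp]: "odd_denom 1"
  using odd_denom_of_int[of 1] by simp

lemma odd_denom_numeral [simp]: "odd_denom (numeral n)"
  using odd_denom_of_nat[of "numeral n"] by simp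

lemma odd_denom_add:
  assumes "odd_denom x" "odd_denom y"
  shows "odd_denom (x + y)"
proof -
  obtain a b c d :: int where "odd b" "x = of_int a / of_int b" "odd d" "y = of_int c / of_int d"
    using assms unfolding odd_denom_def by blast
  moreover from this have "b \<noteq> 0" "d \<noteq> 0" by auto
  ultimately show ?thesis
    unfolding odd_denom_def by (intro exI[of _ "a * d + c * b"] exI[of _ "b * d"]) (simp add: field_simps)
qed

lemma odd_denom_mult:
  assumes "odd_denom x" "odd_denom y"
  shows "odd_denom (x * y)"
proof -
  obtain a b c d :: int where "odd b" "x = of_int a / of_int b" "odd d" "y = of_int c / of_int d"
    using assms unfolding odd_denom_def by blast
  then show ?thesis
    unfolding odd_denom_def by (intro exI[of _ "a * c"] exI[of _ "b * d"]) simp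
qed

lemma odd_denom_uminus: "odd_denom x \<Longrightarrow> odd_denom (- x)"
  using odd_denom_mult[OF odd_denom_of_int[of "-1"]] by simp

lemma odd_denom_diff: "odd_denom x \<Longrightarrow> odd_denom y \<Longrightarrow> odd_denom (x - y)"
  using odd_denom_add[OF _ odd_denom_uminus] by simp

lemma odd_denom_sum: "(\<And>i. i \<in> A \<Longrightarrow> odd_denom (f i)) \<Longrightarrow> odd_denom (sum f A)"
  by (induction A rule: infinite_finite_induct) (simp_all add: odd_denom_add)

lemma not_odd_denom_half: "\<not> odd_denom (1 / 2)"
proof
  assume "odd_denom (1 / 2)"
  then obtain a b :: int where "odd b" and "1 / 2 = (of_int a / of_int b :: rat)"
    unfolding odd_denom_def by blast
  then have "of_int b = (of_int (2 * a) :: rat)" by (auto simp: field_simps)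
  then have "b = 2 * a" by (simp only: of_int_eq_iff)
  with \<open>odd b\<close> show False by simp
qed

lemma odd_denom_pow2_divide:
  assumes "m \<ge> 1" "m < 2 ^ (n + 1)"
  shows "odd_denom (2 ^ n / of_nat m)"
proof -
  define v where "v = multiplicity 2 m"
  obtain u where m: "m = 2 ^ v * u" and "\<not> 2 dvd u"
    using multiplicity_decompose'[of m 2] assms(1) unfolding v_def by auto
  have "u \<ge> 1" using \<open>\<not> 2 dvd u\<close> by (cases u) auto
  then have "2 ^ v \<le> m" using m by simp
  then have "v \<le> n"
    using assms(2) power_less_imp_less_exp[of "2::nat" v "n + 1"] by linarith
  then have "(2::rat) ^ n / of_nat m = of_int (2 ^ (n - v)) / of_int (int u)"
    using \<open>u \<ge> 1\<close> by (subst m) (simp add: field_simps flip: power_add)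
  then show ?thesis
    unfolding odd_denom_def using \<open>\<not> 2 dvd u\<close>
    by (intro exI[of _ "2 ^ (n - v)"] exI[of _ "int u"]) simp
qed

lemma bernoulli_recurrence_odd_denom:
  assumes "c \<ge> 1" and IH: "\<And>e. e < c \<Longrightarrow> odd_denom (2 * bernoulli e)"
  obtains R where "odd_denom R" "2 * bernoulli c = 1 - of_nat c * (2 * bernoulli (c - 1)) - 2 * R"
proof
  \<comment> \<open>The terms with \<open>j \<ge> 2\<close> have odd denominator because \<open>j + 1 < 2 ^ j\<close>.\<close>
  define R where "R = (\<Sum>j\<in>{2..c}. of_nat (c choose j) * 2 ^ j / of_nat (Suc j) * bernoulli (c - j))"
  have "odd_denom (of_nat (c choose j) * 2 ^ j / of_nat (Suc j) * bernoulli (c - j))"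
    if "j \<in> {2..c}" for j
  proof -
    have "2 \<le> j" using that by simp
    then have "j + 1 < 2 ^ j" by (induction j rule: nat_induct_at_least) auto
    then have pow2_div: "odd_denom (2 ^ (j - 1) / of_nat (Suc j))"
      using that by (intro odd_denom_pow2_divide) simp_all
    have "(2::rat) ^ j = 2 * 2 ^ (j - 1)" using that by (simp flip: power_Suc)
    then have "of_nat (c choose j) * 2 ^ j / of_nat (Suc j) * bernoulli (c - j)
        = of_nat (c choose j) * (2 ^ (j - 1) / of_nat (Suc j)) * (2 * bernoulli (c - j))"
      by simp
    also have "odd_denom \<dots>"
      using that by (intro odd_denom_mult[OF odd_denom_mult[OF odd_denom_of_nat pow2_div]] IH) auto
    finally show ?thesis .
  qed
  then show "odd_denom R" unfolding R_def by (rule odd_denom_sum)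
  have "{..c} = {0, 1} \<union> {2..c}" using assms(1) by auto
  then show "2 * bernoulli c = 1 - of_nat c * (2 * bernoulli (c - 1)) - 2 * R"
    using bernoulli_recurrence[OF assms(1)] assms(1) by (simp add: R_def algebra_simps)
qed

lemma odd_denom_two_bernoulli: "odd_denom (2 * bernoulli c)"
proof (induction c rule: less_induct)
  case (less c)
  show ?case
  proof (cases "c = 0")
    case False
    then obtain R where "odd_denom R" "2 * bernoulli c = 1 - of_nat c * (2 * bernoulli (c - 1)) - 2 * R"
      using bernoulli_recurrence_odd_denom less.IH by (metis less_one not_less)
    then show ?thesis using less.IH[of "c - 1"] False by (simp add: odd_denom_diff odd_denom_mult)
  qed (simp add: bernoulli_0)
qed

lemma bernoulli_even_nonzero:
  assumes "even c" "c \<ge> 2"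
  shows "bernoulli c \<noteq> 0"
proof
  assume "bernoulli c = 0"
  obtain R where "odd_denom R" "2 * bernoulli c = 1 - of_nat c * (2 * bernoulli (c - 1)) - 2 * R"
    using bernoulli_recurrence_odd_denom[of c] odd_denom_two_bernoulli assms(2)
    by (metis one_le_numeral order.trans)
  moreover obtain k where "c = 2 * k" using assms(1) by blast
  ultimately have "1 / 2 = of_nat k * (2 * bernoulli (c - 1)) + R"
    using \<open>bernoulli c = 0\<close> by (simp add: field_simps)
  also have "odd_denom \<dots>"
    using \<open>odd_denom R\<close>
    by (intro odd_denom_add odd_denom_mult odd_denom_of_nat odd_denom_two_bernoulli)
  finally show False using not_odd_denom_half by blast
qed

section \<open>Laurent expansions of the Dirichlet coefficients\<close>

definition laurent_expansion :: "(nat \<Rightarrow> 'a::field_char_0) \<Rightarrow> nat \<Rightarrow> (nat \<Rightarrow> 'a) \<Rightarrow> bool" where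
  "laurent_expansion v D \<gamma> \<longleftrightarrow>
     (\<exists>\<alpha> \<beta>. \<forall>N\<ge>1. v N = \<alpha> * of_nat N + \<beta> + (\<Sum>d\<in>{1..D}. \<gamma> d / of_nat N ^ d))"

lemma laurent_expansion_0: "laurent_expansion (\<lambda>_. 0) D (\<lambda>_. 0)"
  unfolding laurent_expansion_def by (intro exI[of _ 0]) simp

lemma laurent_expansion_add:
  assumes "laurent_expansion v D \<gamma>" "laurent_expansion w D \<delta>"
  shows "laurent_expansion (\<lambda>N. v N + w N) D (\<lambda>d. \<gamma> d + \<delta> d)"
proof -
  obtain \<alpha> \<beta> \<alpha>' \<beta>'
    where "\<forall>N\<ge>1. v N = \<alpha> * of_nat N + \<beta> + (\<Sum>d\<in>{1..D}. \<gamma> d / of_nat N ^ d)"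
      "\<forall>N\<ge>1. w N = \<alpha>' * of_nat N + \<beta>' + (\<Sum>d\<in>{1..D}. \<delta> d / of_nat N ^ d)"
    using assms unfolding laurent_expansion_def by blast
  then show ?thesis
    unfolding laurent_expansion_def
    by (intro exI[of _ "\<alpha> + \<alpha>'"] exI[of _ "\<beta> + \<beta>'"])
      (simp add: add_divide_distrib sum.distrib algebra_simps)
qed

lemma laurent_expansion_cmult:
  assumes "laurent_expansion v D \<gamma>"
  shows "laurent_expansion (\<lambda>N. t * v N) D (\<lambda>d. t * \<gamma> d)"
proof -
  obtain \<alpha> \<beta> where "\<forall>N\<ge>1. v N = \<alpha> * of_nat N + \<beta> + (\<Sum>d\<in>{1..D}. \<gamma> d / of_nat N ^ d)"
    using assms unfolding laurent_expansion_def by blast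
  then show ?thesis
    unfolding laurent_expansion_def
    by (intro exI[of _ "t * \<alpha>"] exI[of _ "t * \<beta>"]) (simp add: sum_distrib_left algebra_simps)
qed

lemma laurent_expansion_sum:
  assumes "finite I" "\<And>i. i \<in> I \<Longrightarrow> laurent_expansion (v i) D (\<gamma> i)"
  shows "laurent_expansion (\<lambda>N. \<Sum>i\<in>I. v i N) D (\<lambda>d. \<Sum>i\<in>I. \<gamma> i d)"
  using assms by (induction I rule: finite_induct) (simp_all add: laurent_expansion_0 laurent_expansion_add)

lemma laurent_expansion_coeff_eq_0:
  assumes "laurent_expansion v D \<gamma>" "\<And>N. N \<ge> 2 \<Longrightarrow> v N = 0" "d \<in> {1..D}"
  shows "\<gamma> d = 0"
proof -
  obtain \<alpha> \<beta> where v: "\<forall>N\<ge>1. v N = \<alpha> * of_nat N + \<beta> + (\<Sum>d\<in>{1..D}. \<gamma> d / of_nat N ^ d)"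
    using assms(1) unfolding laurent_expansion_def by blast
  \<comment> \<open>Clearing denominators turns the expansion into a polynomial with infinitely many roots.\<close>
  define p where "p = monom \<alpha> (D + 1) + monom \<beta> D + (\<Sum>d\<in>{1..D}. monom (\<gamma> d) (D - d))"
  have "poly p (of_nat N) = 0" if "N \<ge> 2" for N
  proof -
    have "(of_nat N :: 'a) \<noteq> 0" using that by simp
    then have "\<gamma> d * of_nat N ^ (D - d) = of_nat N ^ D * (\<gamma> d / of_nat N ^ d)"
      if "d \<in> {1..D}" for d
      using that by (simp add: field_simps flip: power_add)
    then have "poly p (of_nat N) = of_nat N ^ D * v N"
      using v that by (simp add: p_def poly_monom poly_sum sum_distrib_left algebra_simps)
    then show ?thesis using assms(2) that by simp
  qed
  then have "p = 0" by (intro poly_eq_0_if_zero_at_large_nats[of 2]) auto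
  have "coeff p (D - d) = (\<Sum>e\<in>{1..D}. if D - e = D - d then \<gamma> e else 0)"
    using assms(3) by (auto simp: p_def coeff_sum)
  also have "\<dots> = (\<Sum>e\<in>{1..D}. if e = d then \<gamma> e else 0)"
    using assms(3) by (intro sum.cong) auto
  also have "\<dots> = \<gamma> d" using assms(3) by simp
  finally show ?thesis using \<open>p = 0\<close> by simp
qed

definition dzeta_coeff :: "nat \<Rightarrow> nat \<Rightarrow> rat" where
  "dzeta_coeff c N = (\<Sum>m\<in>{1..<N}. of_nat m ^ c) / of_nat N ^ c"

text \<open>The coefficient of \<open>N ^ (- d)\<close> in \<open>dzeta_coeff c N = poly (power_sum_poly c) N / N ^ c\<close>.\<close>

definition laurent_coeff :: "nat \<Rightarrow> nat \<Rightarrow> rat" where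
  "laurent_coeff c d = (if 1 \<le> d \<and> d \<le> c then coeff (power_sum_poly c) (c - d) else 0)"

lemma laurent_coeff_even: "even d \<Longrightarrow> laurent_coeff c d = 0"
  by (auto simp: laurent_coeff_def intro!: coeff_power_sum_poly_same_parity)

lemma laurent_coeff_greater: "c < d \<Longrightarrow> laurent_coeff c d = 0"
  by (simp add: laurent_coeff_def)

lemma laurent_coeff_self: "laurent_coeff c c = 0"
  by (simp add: laurent_coeff_def coeff_0_power_sum_poly)

lemma laurent_coeff_pred: "c \<ge> 2 \<Longrightarrow> laurent_coeff c (c - 1) = bernoulli c"
  by (simp add: laurent_coeff_def bernoulli_def)

lemma laurent_expansion_dzeta_coeff:
  assumes "c \<le> D"
  shows "laurent_expansion (dzeta_coeff c) D (laurent_coeff c)"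
proof (cases "c = 0")
  case True
  then show ?thesis
    unfolding laurent_expansion_def
    by (intro exI[of _ 1] exI[of _ "-1"]) (simp add: dzeta_coeff_def laurent_coeff_def)
next
  case False
  let ?a = "coeff (power_sum_poly c)"
  have "dzeta_coeff c N = ?a (c + 1) * of_nat N + ?a c + (\<Sum>d\<in>{1..D}. laurent_coeff c d / of_nat N ^ d)"
    if "N \<ge> 1" for N
  proof -
    define x :: rat where "x = of_nat N"
    have "x \<noteq> 0" using that by (simp add: x_def)
    have "(\<Sum>m\<in>{1..<N}. of_nat m ^ c) = (\<Sum>m<N. (of_nat m :: rat) ^ c)"
      using False by (intro sum.mono_neutral_left) auto
    also have "\<dots> = (\<Sum>i<c. ?a i * x ^ i) + ?a c * x ^ c + ?a (c + 1) * x ^ (c + 1)"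
      by (simp add: poly_power_sum_poly_of_nat[symmetric] poly_altdef_le[OF degree_power_sum_poly]
          x_def lessThan_Suc_atMost[symmetric])
    finally have "dzeta_coeff c N = (\<Sum>i<c. ?a i * x ^ i / x ^ c) + ?a c + ?a (c + 1) * x"
      using \<open>x \<noteq> 0\<close>
      by (simp add: dzeta_coeff_def x_def[symmetric] add_divide_distrib sum_divide_distrib)
    also have "(\<Sum>i<c. ?a i * x ^ i / x ^ c) = (\<Sum>i<c. ?a i / x ^ (c - i))"
      using \<open>x \<noteq> 0\<close> by (intro sum.cong) (simp_all add: power_diff)
    also have "\<dots> = (\<Sum>d\<in>{1..c}. laurent_coeff c d / x ^ d)"
      by (rule sum.reindex_bij_witness[of _ "\<lambda>d. c - d" "\<lambda>i. c - i"]) (auto simp: laurent_coeff_def)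
    also have "\<dots> = (\<Sum>d\<in>{1..D}. laurent_coeff c d / x ^ d)"
      using assms by (intro sum.mono_neutral_left) (auto simp: laurent_coeff_greater)
    finally show ?thesis by (simp add: x_def)
  qed
  then show ?thesis unfolding laurent_expansion_def by blast
qed

lemma dzeta_coeff_nonneg: "dzeta_coeff c N \<ge> 0"
  by (simp add: dzeta_coeff_def sum_nonneg)

lemma dzeta_coeff_le: "dzeta_coeff c N \<le> of_nat N"
proof (cases "N = 0")
  case False
  have "(\<Sum>m\<in>{1..<N}. (of_nat m :: rat) ^ c) \<le> (\<Sum>m\<in>{1..<N}. of_nat N ^ c)"
    by (intro sum_mono power_mono) auto
  also have "\<dots> \<le> of_nat N * of_nat N ^ c" by (simp add: mult_right_mono)
  finally show ?thesis using False by (simp add: dzeta_coeff_def divide_le_eq)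
qed (simp add: dzeta_coeff_def)

lemma in_span_dzeta_coeff_even:
  assumes "laurent_expansion v D \<gamma>" "2 * K \<le> D"
    and "\<And>d. even d \<or> 2 * K < d \<Longrightarrow> \<gamma> d = 0" and "v 1 = 0"
  shows "\<exists>q. \<forall>N\<ge>1. v N = (\<Sum>i\<le>K. q i * dzeta_coeff (2 * i) N)"
  using assms
proof (induction K arbitrary: v \<gamma>)
  case 0
  then obtain \<alpha> \<beta> where "\<forall>N\<ge>1. v N = \<alpha> * of_nat N + \<beta>"
    unfolding laurent_expansion_def by auto
  then have "v N = \<alpha> * dzeta_coeff 0 N" if "N \<ge> 1" for N
    using that \<open>v 1 = 0\<close> by (simp add: dzeta_coeff_def of_nat_diff algebra_simps)
  then show ?case by auto
next
  case (Suc K)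
  \<comment> \<open>The coefficient of \<open>N ^ (- 2 * K - 1)\<close> in \<open>dzeta_coeff (2 * K + 2)\<close> is the nonzero
      \<open>bernoulli (2 * K + 2)\<close>, so a multiple of it removes that term from \<open>v\<close>.\<close>
  define c where "c = 2 * Suc K"
  define t where "t = \<gamma> (2 * K + 1) / bernoulli c"
  have "bernoulli c \<noteq> 0" unfolding c_def by (rule bernoulli_even_nonzero) auto
  define w where "w N = v N + - t * dzeta_coeff c N" for N
  have w_expansion: "laurent_expansion w D (\<lambda>d. \<gamma> d + - t * laurent_coeff c d)"
    unfolding w_def using Suc.prems(1,2)
    by (intro laurent_expansion_add laurent_expansion_cmult laurent_expansion_dzeta_coeff)
      (simp_all add: c_def)
  have w_vanish: "\<gamma> d + - t * laurent_coeff c d = 0" if "even d \<or> 2 * K < d" for d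
  proof -
    have "d = 2 * K + 1 \<or> even d \<or> 2 * Suc K < d" using that by presburger
    then show ?thesis
      using Suc.prems(3) laurent_coeff_pred[of c] \<open>bernoulli c \<noteq> 0\<close>
      by (auto simp: t_def c_def laurent_coeff_even laurent_coeff_greater)
  qed
  have "w 1 = 0" using Suc.prems(4) by (simp add: w_def dzeta_coeff_def)
  then obtain q where q: "\<forall>N\<ge>1. w N = (\<Sum>i\<le>K. q i * dzeta_coeff (2 * i) N)"
    using Suc.IH[OF w_expansion _ w_vanish] Suc.prems(2) by auto
  have "v N = (\<Sum>i\<le>Suc K. (q(Suc K := t)) i * dzeta_coeff (2 * i) N)" if "N \<ge> 1" for N
    using q[rule_format, OF that] by (simp add: w_def c_def diff_eq_eq)
  then show ?case by blast
qed

lemma dzeta_coeff_odd_in_span: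
  assumes "odd c"
  shows "\<exists>q. \<forall>N\<ge>1. dzeta_coeff c N = (\<Sum>i\<le>c div 2. q i * dzeta_coeff (2 * i) N)"
proof (rule in_span_dzeta_coeff_even)
  show "laurent_expansion (dzeta_coeff c) c (laurent_coeff c)"
    by (rule laurent_expansion_dzeta_coeff) simp
  show "laurent_coeff c d = 0" if "even d \<or> 2 * (c div 2) < d" for d
  proof -
    have "even d \<or> d = c \<or> c < d" using that assms by presburger
    then show ?thesis by (auto simp: laurent_coeff_even laurent_coeff_self laurent_coeff_greater)
  qed
qed (simp_all add: dzeta_coeff_def)

lemma dzeta_coeff_even_independent:
  assumes "\<And>N. N \<ge> 2 \<Longrightarrow> (\<Sum>i\<le>K. q i * dzeta_coeff (2 * i) N) = 0"
  shows "\<forall>i\<le>K. q i = 0"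
  using assms
proof (induction K)
  case 0
  then show ?case using "0.prems"[of 2] by (simp add: dzeta_coeff_def)
next
  case (Suc K)
  \<comment> \<open>Only \<open>dzeta_coeff (2 * K + 2)\<close> contributes to the coefficient of \<open>N ^ (- 2 * K - 1)\<close>.\<close>
  have "laurent_expansion (\<lambda>N. \<Sum>i\<le>Suc K. q i * dzeta_coeff (2 * i) N) (2 * Suc K)
          (\<lambda>d. \<Sum>i\<le>Suc K. q i * laurent_coeff (2 * i) d)"
    by (intro laurent_expansion_sum laurent_expansion_cmult laurent_expansion_dzeta_coeff) auto
  then have "(\<Sum>i\<le>Suc K. q i * laurent_coeff (2 * i) (2 * K + 1)) = 0"
    using Suc.prems by (rule laurent_expansion_coeff_eq_0) auto
  also have "(\<Sum>i\<le>Suc K. q i * laurent_coeff (2 * i) (2 * K + 1))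
      = q (Suc K) * bernoulli (2 * Suc K)"
    using laurent_coeff_pred[of "2 * Suc K"] by (simp add: laurent_coeff_greater)
  finally have "q (Suc K) = 0" using bernoulli_even_nonzero[of "2 * Suc K"] by simp
  with Suc.prems have "\<forall>i\<le>K. q i = 0" by (intro Suc.IH) simp
  with \<open>q (Suc K) = 0\<close> show ?case by (auto simp: le_Suc_eq)
qed

section \<open>Dirichlet series\<close>

definition dzeta_term :: "nat \<Rightarrow> complex \<Rightarrow> nat \<times> nat \<Rightarrow> complex" where
  "dzeta_term c s = (\<lambda>(N, m). of_nat m ^ c * of_nat N powr (- s - of_nat c))"

lemma dzeta_term_abs_summable:
  assumes "Re s > 2"
  shows "(\<lambda>x. norm (dzeta_term c s x)) summable_on Sigma {2..} (\<lambda>N. {1..<N})"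
proof -
  define \<sigma> where "\<sigma> = Re s"
  have norm_term: "norm (of_nat m ^ c * of_nat N powr (- s - of_nat c) :: complex)
      = real m ^ c * real N powr (- \<sigma> - real c)" for N m :: nat
    by (simp add: norm_mult norm_power norm_powr_real_powr \<sigma>_def)
  have row_bound:
    "(\<Sum>m\<in>{1..<N}. real m ^ c * real N powr (- \<sigma> - real c)) \<le> real N powr (1 - \<sigma>)"
    if "N \<ge> 2" for N :: nat
  proof -
    have "(\<Sum>m\<in>{1..<N}. real m ^ c * real N powr (- \<sigma> - real c))
        \<le> (\<Sum>m\<in>{1..<N}. real N ^ c * real N powr (- \<sigma> - real c))"
      by (intro sum_mono mult_right_mono power_mono) auto
    also have "\<dots> \<le> real N * (real N ^ c * real N powr (- \<sigma> - real c))"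
      by (simp add: mult_right_mono)
    also have "\<dots> = real N powr (1 - \<sigma>)"
      using that by (simp add: powr_diff powr_realpow powr_minus divide_inverse powr_add[symmetric])
    finally show ?thesis .
  qed
  have "summable (\<lambda>N::nat. real N powr (1 - \<sigma>))"
    using assms by (subst summable_real_powr_iff) (simp add: \<sigma>_def)
  then have "(\<lambda>N::nat. real N powr (1 - \<sigma>)) summable_on UNIV"
    by (subst summable_on_UNIV_nonneg_real_iff) auto
  then have "(\<lambda>N::nat. real N powr (1 - \<sigma>)) summable_on {2..}"
    by (rule summable_on_subset) simp
  then have "(\<lambda>N. norm (\<Sum>\<^sub>\<infinity>m\<in>{1..<N}.
      norm (of_nat m ^ c * of_nat N powr (- s - of_nat c) :: complex))) summable_on {2..}"
    by (rule summable_on_comparison_test) (use row_bound in \<open>auto simp: norm_term sum_nonneg\<close>)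
  then show ?thesis
    by (intro Infinite_Sum.abs_summable_on_Sigma_iff[THEN iffD2] conjI ballI) (auto simp: dzeta_term_def)
qed

lemma norm_dirichlet_tail_term_le:
  fixes a :: "nat \<Rightarrow> complex"
  assumes "norm (a n) \<le> C * of_nat n" "C \<ge> 0" "1 \<le> N" "N < n" "3 \<le> k"
  shows "norm (a n / of_nat n ^ k)
           \<le> C * real N ^ 3 * (real N / real (N + 1)) ^ (k - 3) / real N ^ k * inverse (real n ^ 2)"
proof -
  have "real N / real n \<le> real N / real (N + 1)"
    using assms(3,4) by (intro divide_left_mono) auto
  then have ratio: "(real N / real n) ^ (k - 3) \<le> (real N / real (N + 1)) ^ (k - 3)"
    by (intro power_mono) auto
  have n_pow: "real n ^ k = real n ^ 3 * real n ^ (k - 3)"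
    and N_pow: "real N ^ k = real N ^ 3 * real N ^ (k - 3)"
    using assms(5) by (simp_all flip: power_add)
  have "norm (a n / of_nat n ^ k) \<le> C * real n / real n ^ k"
    using assms(1) by (simp add: norm_divide norm_power divide_right_mono)
  also have "\<dots> = C * inverse (real n ^ 2) * (real N / real n) ^ (k - 3) / real N ^ (k - 3)"
    using assms(3,4) by (simp add: n_pow power_divide power2_eq_square power3_eq_cube field_simps)
  also have "\<dots> \<le> C * inverse (real n ^ 2) * (real N / real (N + 1)) ^ (k - 3) / real N ^ (k - 3)"
    using ratio assms(2) by (intro divide_right_mono mult_left_mono) auto
  also have "\<dots> = C * real N ^ 3 * (real N / real (N + 1)) ^ (k - 3) / real N ^ k * inverse (real n ^ 2)"
    using assms(3) by (simp add: N_pow field_simps)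
  finally show ?thesis .
qed

lemma inverse_square_summable_on: "(\<lambda>n::nat. inverse (real n ^ 2)) summable_on A"
proof -
  have "(\<lambda>n::nat. inverse (real n ^ 2)) summable_on UNIV"
    by (subst summable_on_UNIV_nonneg_real_iff) (auto intro: inverse_power_summable)
  then show ?thesis by (rule summable_on_subset) simp
qed

lemma norm_first_dirichlet_coeff_le:
  fixes a :: "nat \<Rightarrow> complex"
  assumes bound: "\<And>n. norm (a n) \<le> C * of_nat n" and "C \<ge> 0"
    and sum_0: "((\<lambda>n. a n / of_nat n ^ k) has_sum 0) {2..}" and "3 \<le> k"
    and "2 \<le> N" and below_0: "\<And>n. 2 \<le> n \<Longrightarrow> n < N \<Longrightarrow> a n = 0"
  shows "norm (a N)
           \<le> (real N / real (N + 1)) ^ (k - 3)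
              * (C * real N ^ 3 * (\<Sum>\<^sub>\<infinity>n\<in>{N<..}. inverse (real n ^ 2)))"
proof -
  let ?f = "\<lambda>n. a n / of_nat n ^ k"
  define K where "K = C * real N ^ 3 * (real N / real (N + 1)) ^ (k - 3) / real N ^ k"
  have tail_le: "norm (?f n) \<le> K * inverse (real n ^ 2)" if "n \<in> {N<..}" for n
    unfolding K_def using that assms by (intro norm_dirichlet_tail_term_le) auto
  have tail_abs: "(\<lambda>n. norm (?f n)) summable_on {N<..}"
    by (rule Infinite_Sum.abs_summable_on_comparison_test'
        [OF summable_on_cmult_right[OF inverse_square_summable_on]]) (rule tail_le)
  then have tail: "?f summable_on {N<..}" by (simp add: summable_on_iff_abs_summable_on_complex)
  have summable: "?f summable_on {2..}" using sum_0 by (rule has_sum_imp_summable)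
  have "0 = infsum ?f {2..}" using sum_0 by (simp add: has_sum_iff)
  also have "{2..} = {2..<N} \<union> insert N {N<..}" using \<open>2 \<le> N\<close> by auto
  also have "infsum ?f \<dots> = infsum ?f {2..<N} + infsum ?f (insert N {N<..})"
    using \<open>2 \<le> N\<close> by (intro infsum_Un_disjoint summable_on_subset[OF summable]) auto
  also have "infsum ?f {2..<N} = 0" using below_0 by (simp add: infsum_0)
  also have "infsum ?f (insert N {N<..}) = ?f N + infsum ?f {N<..}" by (rule infsum_insert[OF tail]) simp
  finally have "?f N = - infsum ?f {N<..}" by (simp add: eq_neg_iff_add_eq_0)
  then have "norm (?f N) = norm (infsum ?f {N<..})" by simp
  also have "\<dots> \<le> infsum (\<lambda>n. norm (?f n)) {N<..}"
    by (rule norm_infsum_bound[OF tail_abs])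
  also have "\<dots> \<le> infsum (\<lambda>n. K * inverse (real n ^ 2)) {N<..}"
    by (rule infsum_mono[OF tail_abs summable_on_cmult_right[OF inverse_square_summable_on]]) (rule tail_le)
  also have "\<dots> = K * (\<Sum>\<^sub>\<infinity>n\<in>{N<..}. inverse (real n ^ 2))"
    by (rule infsum_cmult_right) (rule inverse_square_summable_on)
  finally show ?thesis
    using \<open>2 \<le> N\<close> by (simp add: K_def norm_divide norm_power field_simps)
qed

lemma dirichlet_coeff_eq_0:
  fixes a :: "nat \<Rightarrow> complex"
  assumes bound: "\<And>n. norm (a n) \<le> C * of_nat n"
    and sum_0: "\<And>k. k \<ge> 3 \<Longrightarrow> ((\<lambda>n. a n / of_nat n ^ k) has_sum 0) {2..}"
    and "N \<ge> 2"
  shows "a N = 0"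
  using \<open>N \<ge> 2\<close>
proof (induction N rule: less_induct)
  case (less N)
  have "C \<ge> 0" using bound[of 1] norm_ge_zero[of "a 1"] by linarith
  define r where "r = real N / real (N + 1)"
  define M where "M = C * real N ^ 3 * (\<Sum>\<^sub>\<infinity>n\<in>{N<..}. inverse (real n ^ 2))"
  \<comment> \<open>In \<open>\<Sum>n\<ge>N. a n / n ^ k = 0\<close> the tail after \<open>n = N\<close> is \<open>O(r ^ k)\<close> relative to \<open>N ^ - k\<close>.\<close>
  have "norm (a N) \<le> r ^ j * M" for j
    using norm_first_dirichlet_coeff_le[OF bound \<open>C \<ge> 0\<close> sum_0[of "j + 3"]] less
    by (simp add: r_def M_def)
  moreover have "(\<lambda>j. r ^ j * M) \<longlonglongrightarrow> 0"
    by (intro tendsto_mult_left_zero LIMSEQ_power_zero) (simp add: r_def)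
  ultimately have "norm (a N) \<le> 0"
    by (intro tendsto_le[OF trivial_limit_sequentially _ tendsto_const]) auto
  then show ?case by simp
qed

lemma dzeta_has_sum:
  assumes "Re s > 2"
  shows "((\<lambda>N. of_rat (dzeta_coeff c N) * of_nat N powr (- s)) has_sum dzeta c s) {2..}"
proof -
  have bij: "bij_betw (\<lambda>(N, m). (m, N - m)) (Sigma {2::nat..} (\<lambda>N. {1..<N})) ({1..} \<times> {1..})"
    by (rule bij_betw_byWitness[where f' = "\<lambda>(m, n). (m + n, m)"]) auto
  define f where "f = (\<lambda>(m, n). of_nat m ^ c * of_nat (m + n) powr (- s - of_nat c) :: complex)"
  have "dzeta c s = infsum f ({1..} \<times> {1..})" using assms by (simp add: dzeta_def f_def)
  also have "\<dots> = infsum (\<lambda>x. f ((\<lambda>(N, m). (m, N - m)) x)) (Sigma {2..} (\<lambda>N. {1..<N}))"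
    by (rule infsum_reindex_bij_betw[OF bij, symmetric])
  also have "\<dots> = infsum (dzeta_term c s) (Sigma {2..} (\<lambda>N. {1..<N}))"
    by (rule infsum_cong) (auto simp: f_def dzeta_term_def)
  finally have "dzeta c s = infsum (dzeta_term c s) (Sigma {2..} (\<lambda>N. {1..<N}))" .
  then have "(dzeta_term c s has_sum dzeta c s) (Sigma {2..} (\<lambda>N. {1..<N}))"
    using dzeta_term_abs_summable[OF assms, of c]
    by (simp add: has_sum_iff summable_on_iff_abs_summable_on_complex)
  moreover have
    "((\<lambda>m. dzeta_term c s (N, m)) has_sum of_rat (dzeta_coeff c N) * of_nat N powr (- s)) {1..<N}"
    if "N \<in> {2..}" for N
  proof -
    have "(of_nat N :: complex) \<noteq> 0" using that by simp
    then have "(\<Sum>m\<in>{1..<N}. dzeta_term c s (N, m)) = of_rat (dzeta_coeff c N) * of_nat N powr (- s)"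
      by (simp add: dzeta_term_def dzeta_coeff_def sum_distrib_right sum_divide_distrib powr_diff
          powr_nat' of_rat_divide of_rat_sum of_rat_power)
    then show ?thesis by (intro has_sum_finiteI) auto
  qed
  ultimately show ?thesis by (rule has_sum_Sigma')
qed

section \<open>The rational span\<close>

lemma (in module) span_range_eq_UN_span_atMost:
  fixes f :: "nat \<Rightarrow> 'b"
  shows "span (range f) = (\<Union>K. span (f ` {..K}))"
proof
  show "span (range f) \<subseteq> (\<Union>K. span (f ` {..K}))"
  proof
    fix x assume "x \<in> span (range f)"
    then show "x \<in> (\<Union>K. span (f ` {..K}))"
    proof (induction rule: span_induct_alt)
      case base
      show ?case using span_zero by blast
    next
      case (step c x y)
      then obtain i K where "x = f i" "y \<in> span (f ` {..K})" by blast
      moreover have "span (f ` {..K}) \<subseteq> span (f ` {..max i K})" by (intro span_mono) auto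
      ultimately have "scale c x + y \<in> span (f ` {..max i K})"
        by (intro span_add span_scale) (auto intro: span_base)
      then show ?case by blast
    qed
  qed
qed (auto intro: subsetD[OF span_mono, rotated])

lemma (in vector_space) inj_and_independent_range:
  fixes f :: "nat \<Rightarrow> 'b"
  assumes lincomb_0: "\<And>K u. (\<Sum>i\<le>K. scale (u i) (f i)) = 0 \<Longrightarrow> \<forall>i\<le>K. u i = 0"
  shows "inj f" "independent (range f)"
proof -
  show "inj f"
  proof (rule injI, rule ccontr)
    fix i j assume "f i = f j" "i \<noteq> j"
    define u :: "nat \<Rightarrow> 'a" where "u k = (if k = i then 1 else if k = j then -1 else 0)" for k
    have "(\<Sum>k\<le>max i j. scale (u k) (f k)) = f i - f j"
      using \<open>i \<noteq> j\<close>
      by (simp add: u_def if_distrib[of "\<lambda>a. scale a _"] sum.If_cases Int_absorb1 insert_Diff_if)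
    then have "u i = 0" using lincomb_0[where K = "max i j" and u = u] \<open>f i = f j\<close> by simp
    then show False by (simp add: u_def)
  qed
  show "independent (range f)"
  proof
    assume "dependent (range f)"
    then obtain T u v
      where T: "finite T" "T \<subseteq> range f" "(\<Sum>v\<in>T. scale (u v) v) = 0" "v \<in> T" "u v \<noteq> 0"
      unfolding dependent_explicit by blast
    then obtain I where I: "finite I" "T = f ` I" by (meson finite_subset_image)
    define K where "K = \<Sum>I"
    have "I \<subseteq> {..K}" using I(1) unfolding K_def by (auto intro: member_le_sum[of _ I id, simplified])
    have "(\<Sum>i\<le>K. scale (if i \<in> I then u (f i) else 0) (f i)) = (\<Sum>i\<in>I. scale (u (f i)) (f i))"
      using \<open>I \<subseteq> {..K}\<close>
      by (simp add: if_distrib[of "\<lambda>a. scale a _"] sum.If_cases Int_absorb1)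
    also have "\<dots> = (\<Sum>v\<in>T. scale (u v) v)"
      using \<open>inj f\<close> I(2) by (simp add: sum.reindex inj_on_subset[of f UNIV])
    finally have "\<forall>i\<le>K. (if i \<in> I then u (f i) else 0) = 0" using T(3) by (intro lincomb_0) simp
    then show False using T(4,5) I(2) \<open>I \<subseteq> {..K}\<close> by auto
  qed
qed

lemma has_sum_sum:
  fixes f :: "'i \<Rightarrow> 'a \<Rightarrow> 'b::topological_comm_monoid_add"
  assumes "finite I" "\<And>i. i \<in> I \<Longrightarrow> (f i has_sum s i) A"
  shows "((\<lambda>x. \<Sum>i\<in>I. f i x) has_sum (\<Sum>i\<in>I. s i)) A"
  using assms by (induction I rule: finite_induct) (simp_all add: has_sum_add)

lemma of_real_of_rat: "of_real (of_rat r) = (of_rat r :: 'a::real_field)"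
  by (cases r) (simp add: of_rat_rat)

lemma norm_of_rat: "norm (of_rat r :: 'a::real_normed_field) = \<bar>of_rat r\<bar>"
  by (metis norm_of_real of_real_of_rat)

lemma sum_fun_apply: "(\<Sum>i\<in>I. f i) x = (\<Sum>i\<in>I. f i x)"
  by (induction I rule: infinite_finite_induct) auto

interpretation Q: vector_space scaleQ
  by unfold_locales (auto simp: scaleQ_def fun_eq_iff algebra_simps of_rat_add of_rat_mult)

lemma dzeta_lincomb_has_sum:
  assumes "finite I" "Re s > 2"
  shows "((\<lambda>N. of_rat (\<Sum>i\<in>I. q i * dzeta_coeff (h i) N) * of_nat N powr (- s))
           has_sum (\<Sum>i\<in>I. scaleQ (q i) (dzeta (h i))) s) {2..}"
proof -
  have "((\<lambda>N. \<Sum>i\<in>I. of_rat (q i) * (of_rat (dzeta_coeff (h i) N) * of_nat N powr (- s)))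
           has_sum (\<Sum>i\<in>I. of_rat (q i) * dzeta (h i) s)) {2..}"
    using assms by (intro has_sum_sum has_sum_cmult_right dzeta_has_sum)
  then show ?thesis
    by (simp add: sum_fun_apply scaleQ_def of_rat_sum of_rat_mult sum_distrib_right mult.assoc)
qed

lemma dzeta_odd_in_span:
  assumes "odd c"
  shows "dzeta c \<in> Q.span ((\<lambda>i. dzeta (2 * i)) ` {..c div 2})"
proof -
  obtain q where q: "\<forall>N\<ge>1. dzeta_coeff c N = (\<Sum>i\<le>c div 2. q i * dzeta_coeff (2 * i) N)"
    using dzeta_coeff_odd_in_span[OF assms] by blast
  have "dzeta c s = (\<Sum>i\<le>c div 2. scaleQ (q i) (dzeta (2 * i))) s" for s
  proof (cases "Re s > 2")
    case True
    have "((\<lambda>N. of_rat (\<Sum>i\<le>c div 2. q i * dzeta_coeff (2 * i) N) * of_nat N powr (- s))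
            has_sum (\<Sum>i\<le>c div 2. scaleQ (q i) (dzeta (2 * i))) s) {2..}"
      using True by (intro dzeta_lincomb_has_sum) simp_all
    then have "((\<lambda>N. of_rat (dzeta_coeff c N) * of_nat N powr (- s))
            has_sum (\<Sum>i\<le>c div 2. scaleQ (q i) (dzeta (2 * i))) s) {2..}"
      by (rule has_sum_cong[THEN iffD1, rotated]) (use q in simp)
    with dzeta_has_sum[OF True] show ?thesis by (rule has_sum_unique)
  qed (simp add: dzeta_def sum_fun_apply scaleQ_def)
  then have "dzeta c = (\<Sum>i\<le>c div 2. scaleQ (q i) (dzeta (2 * i)))" ..
  also have "\<dots> \<in> Q.span ((\<lambda>i. dzeta (2 * i)) ` {..c div 2})"
    by (intro Q.span_sum Q.span_scale Q.span_base) auto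
  finally show ?thesis .
qed

lemma dzeta_even_lincomb_eq_0:
  assumes "(\<Sum>i\<le>K. scaleQ (q i) (dzeta (2 * i))) = 0"
  shows "\<forall>i\<le>K. q i = 0"
proof (rule dzeta_coeff_even_independent)
  define a where "a N = (of_rat (\<Sum>i\<le>K. q i * dzeta_coeff (2 * i) N) :: complex)" for N
  have "((\<lambda>N. a N / of_nat N ^ k) has_sum 0) {2..}" if "k \<ge> 3" for k
  proof -
    have "((\<lambda>N. a N * of_nat N powr (- of_nat k)) has_sum 0) {2..}"
      using dzeta_lincomb_has_sum[of "{..K}" "of_nat k" q "\<lambda>i. 2 * i"] that assms by (simp add: a_def)
    then show ?thesis
      by (rule has_sum_cong[THEN iffD1, rotated]) (simp add: powr_minus powr_nat' divide_inverse)
  qed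
  moreover have "norm (a N) \<le> (\<Sum>i\<le>K. \<bar>of_rat (q i)\<bar>) * of_nat N" for N
  proof -
    have "\<bar>of_rat (dzeta_coeff c N) :: real\<bar> \<le> of_nat N" for c
    proof -
      have "of_rat (dzeta_coeff c N) \<le> (of_rat (of_nat N) :: real)"
        using dzeta_coeff_le by (simp only: of_rat_less_eq)
      then show ?thesis using dzeta_coeff_nonneg[of c N] by simp
    qed
    moreover have "norm (a N) = \<bar>\<Sum>i\<le>K. of_rat (q i) * of_rat (dzeta_coeff (2 * i) N)\<bar>"
      unfolding a_def norm_of_rat by (simp add: of_rat_sum of_rat_mult)
    ultimately have "norm (a N) \<le> (\<Sum>i\<le>K. \<bar>of_rat (q i)\<bar> * of_nat N)"
      by (auto simp: abs_mult intro!: order.trans[OF sum_abs] sum_mono mult_left_mono)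
    then show ?thesis by (simp add: sum_distrib_right)
  qed
  ultimately have "a N = 0" if "N \<ge> 2" for N
    using that by (intro dirichlet_coeff_eq_0) auto
  then show "(\<Sum>i\<le>K. q i * dzeta_coeff (2 * i) N) = 0" if "N \<ge> 2" for N
    using that by (simp add: a_def)
qed

lemma even_atMost_eq_image: "{c::nat. even c \<and> c \<le> N} = (\<lambda>i. 2 * i) ` {..N div 2}"
  by (auto elim!: evenE)

lemma ZN_eq_span_even: "ZN N = Q.span ((\<lambda>i. dzeta (2 * i)) ` {..N div 2})"
proof
  have "dzeta c \<in> Q.span ((\<lambda>i. dzeta (2 * i)) ` {..N div 2})" if "c \<le> N" for c
  proof (cases "even c")
    case True
    then show ?thesis using that by (intro Q.span_base) (auto elim!: evenE)
  next
    case False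
    have "(\<lambda>i. dzeta (2 * i)) ` {..c div 2} \<subseteq> (\<lambda>i. dzeta (2 * i)) ` {..N div 2}"
      using that by (auto intro: div_le_mono order.trans)
    then show ?thesis using dzeta_odd_in_span[OF False] Q.span_mono by blast
  qed
  then show "ZN N \<subseteq> Q.span ((\<lambda>i. dzeta (2 * i)) ` {..N div 2})"
    unfolding ZN_def by (intro Q.span_minimal) auto
  show "Q.span ((\<lambda>i. dzeta (2 * i)) ` {..N div 2}) \<subseteq> ZN N"
    unfolding ZN_def by (intro Q.span_mono) auto
qed

lemma
  shows inj_dzeta_even: "inj (\<lambda>i. dzeta (2 * i))"
    and independent_dzeta_even: "Q.independent (range (\<lambda>i. dzeta (2 * i)))"
  using Q.inj_and_independent_range[of "\<lambda>i. dzeta (2 * i)"] dzeta_even_lincomb_eq_0 by auto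

lemma Zall_eq_span_even: "Zall = Q.span (range (\<lambda>i. dzeta (2 * i)))"
proof -
  have "Zall = (\<Union>K. Q.span ((\<lambda>i. dzeta (2 * i)) ` {..K}))"
  proof
    show "Zall \<subseteq> (\<Union>K. Q.span ((\<lambda>i. dzeta (2 * i)) ` {..K}))"
      unfolding Zall_def ZN_eq_span_even by blast
    have "Q.span ((\<lambda>i. dzeta (2 * i)) ` {..K}) \<subseteq> ZN (2 * K)" for K
      by (simp add: ZN_eq_span_even)
    then show "(\<Union>K. Q.span ((\<lambda>i. dzeta (2 * i)) ` {..K})) \<subseteq> Zall"
      unfolding Zall_def by blast
  qed
  then show ?thesis by (simp add: Q.span_range_eq_UN_span_atMost)
qed

lemma dim_ZN: "Q.dim (ZN N) = N div 2 + 1"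
proof -
  have "Q.dim (ZN N) = card ((\<lambda>i. dzeta (2 * i)) ` {..N div 2})"
    unfolding ZN_eq_span_even
    by (rule Q.dim_span_eq_card_independent[OF Q.independent_mono[OF independent_dzeta_even]]) auto
  then show ?thesis using inj_dzeta_even by (simp add: card_image inj_on_subset[OF inj_dzeta_even])
qed

theorem theorem2p2:
  shows "(\<forall>N. ZN N = module.span scaleQ (dzeta ` {c. even c \<and> c \<le> N}))
     \<and> Zall = module.span scaleQ (dzeta ` {c. even c})
     \<and> inj_on dzeta {c. even c}
     \<and> \<not> module.dependent scaleQ (dzeta ` {c. even c})
     \<and> (\<forall>N. vector_space.dim scaleQ (ZN N) = N div 2 + 1)"
proof -
  have "dzeta ` {c. even c \<and> c \<le> N} = (\<lambda>i. dzeta (2 * i)) ` {..N div 2}" for N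
    by (simp add: even_atMost_eq_image image_image)
  moreover have "dzeta ` {c. even c} = range (\<lambda>i. dzeta (2 * i))"
    by (auto elim!: evenE)
  moreover have "inj_on dzeta {c. even c}"
    using inj_dzeta_even by (auto simp: inj_on_def inj_def elim!: evenE)
  ultimately show ?thesis
    using ZN_eq_span_even Zall_eq_span_even independent_dzeta_even dim_ZN by auto
qed

end
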